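(* For each $\alpha\in(0,1)$, the zeta probability $Z_\alpha$, defined by $Z_\alpha(0)=0$ and $Z_\alpha(k)=\zeta(1+\alpha)^{-1}k^{-1-\alpha}$ for $k\in\mathbb{N}$, belongs to $\mathcal{A}$.
   Context: $\zeta(s)=\sum_{n\ge1}n^{-s}$ for $s>1$. $\mathbb{P}(\mathbb{Z}^+)$ is the set of functions $F:\mathbb{Z}\to[0,1]$ with $\sum_kF(k)=1$ and $F(k)=0$ for $k<0$; $F^{(n)}$ is the $n$-th convolution power ($(F_1*F_2)(m)=\sum_kF_1(k)F_2(m-k)$). $\mathcal{A}=\{F\in\mathbb{P}(\mathbb{Z}^+):\sup_{n\in\mathbb{N}}n\sum_k|F^{(n)}(k)-F^{(n+1)}(k)|<\infty\}$. *)

theory Defs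
  imports "HOL-Analysis.Analysis"
begin

definition zeta_real :: "real \<Rightarrow> real" where
  "zeta_real s = (\<Sum>n. 1 / (real (Suc n)) powr s)"

definition prob_Zplus :: "(int \<Rightarrow> real) set" where
  "prob_Zplus = {F. (\<forall>k. 0 \<le> F k \<and> F k \<le> 1) \<and> (F has_sum 1) UNIV \<and> (\<forall>k<0. F k = 0)}"

definition conv :: "(int \<Rightarrow> real) \<Rightarrow> (int \<Rightarrow> real) \<Rightarrow> int \<Rightarrow> real" where
  "conv F1 F2 m = (\<Sum>\<^sub>\<infinity>k\<in>UNIV. F1 k * F2 (m - k))"

fun conv_pow :: "(int \<Rightarrow> real) \<Rightarrow> nat \<Rightarrow> int \<Rightarrow> real" where
  "conv_pow F 0 = (\<lambda>k. if k = 0 then 1 else 0)"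
| "conv_pow F (Suc n) = conv F (conv_pow F n)"

definition class_A :: "(int \<Rightarrow> real) set" where
  "class_A = {F \<in> prob_Zplus.
     bdd_above ((\<lambda>n. real n * (\<Sum>\<^sub>\<infinity>k\<in>UNIV. \<bar>conv_pow F n k - conv_pow F (Suc n) k\<bar>)) ` {1..})}"

definition zeta_prob :: "real \<Rightarrow> int \<Rightarrow> real" where
  "zeta_prob \<alpha> k = (if k \<le> 0 then 0 else (1 / zeta_real (1 + \<alpha>)) * real_of_int k powr (-1 - \<alpha>))"

end

(*
  Identify a distribution F on the nonnegative integers with its generating series
  A = sum_k F(k) X^k. Convolution powers become powers A^n, and the l1 norm is the supremum of
  the truncated norms ||a||_K = sum_{k<=K} |a_k|, which are submultiplicative. Modulo X^(K+1),
  1 - A = sum_{j<=K} F(j) (1 - X^j) + (1 - sum_{j<=K} F(j)), and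
  ||(1 - X^j) g||_K <= min (j ||(1 - X) g||_K) (2 ||g||_K); splitting the j-sum at j ~ n^(1/alpha)
  turns the smoothing estimate ||(1 - X) A^n||_K = O(n^(-1/alpha)) into ||A^n - A^(n+1)||_K = O(1/n).

  For the smoothing estimate, Abel summation writes the truncation of A as a sum of blocks
  (F(m) - F(m+1)) (X + ... + X^m), each with ||(1 - X) (X + ... + X^m)|| <= 2. Telescoping A^n
  along the partial Abel sums B_m costs 2 (F(m) - F(m+1)) n ||B_(m+1)||^(n-1) per block, and for
  the zeta distribution ||B_(m+1)|| <= 1 - m F(m+1) <= 1 - kappa m^(-alpha): the blocks with
  m below n^(1/alpha) are exponentially damped, and the others are controlled by
  F(m) - F(m+1) = O(m^(-2-alpha)).
*)

theory Submission
  imports Defs "HOL-Computational_Algebra.Formal_Power_Series"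
begin

lemma powr_add_one_diff_mvt:
  fixes x r :: real
  assumes "0 < x"
  obtains z where "x < z" "z < x + 1" "(x + 1) powr r - x powr r = r * z powr (r - 1)"
proof -
  have "\<exists>z. x < z \<and> z < x + 1 \<and> (x + 1) powr r - x powr r = ((x + 1) - x) * (r * z powr (r - 1))"
    by (rule MVT2[of x "x + 1" "\<lambda>z. z powr r" "\<lambda>z. r * z powr (r - 1)"])
       (use assms in \<open>auto intro!: has_real_derivative_powr\<close>)
  then show ?thesis using that by auto
qed

lemma powr_diff_le:
  fixes x s :: real
  assumes "0 < x" "0 < s"
  shows "x powr (-s) - (x + 1) powr (-s) \<le> s * x powr (-s - 1)"
proof -
  obtain z where z: "x < z" "(x + 1) powr (-s) - x powr (-s) = (-s) * z powr (-s - 1)"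
    using powr_add_one_diff_mvt[OF assms(1), of "-s"] by auto
  have "z powr (-s - 1) \<le> x powr (-s - 1)"
    using z assms by (intro powr_mono2') auto
  then have "s * z powr (-s - 1) \<le> s * x powr (-s - 1)"
    using assms by (intro mult_left_mono) auto
  then show ?thesis using z by linarith
qed

lemma powr_le_diff_powr:
  fixes x s :: real
  assumes "0 < x" "0 < s" "s \<noteq> 1"
  shows "(x + 1) powr (-s) \<le> ((x + 1) powr (1 - s) - x powr (1 - s)) / (1 - s)"
proof -
  obtain z where z: "x < z" "z < x + 1" "(x + 1) powr (1 - s) - x powr (1 - s) = (1 - s) * z powr (-s)"
    using powr_add_one_diff_mvt[OF assms(1), of "1 - s"] by auto
  have "(x + 1) powr (-s) \<le> z powr (-s)"
    using z assms by (intro powr_mono2') auto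
  also have "\<dots> = ((x + 1) powr (1 - s) - x powr (1 - s)) / (1 - s)"
    using z(3) assms(3) by simp
  finally show ?thesis .
qed

lemma sum_powr_le:
  fixes a :: real
  assumes "0 < a" "a < 1"
  shows "(\<Sum>j=1..N. real j powr (-a)) \<le> real N powr (1 - a) / (1 - a)"
proof (induction N)
  case 0
  then show ?case by simp
next
  case (Suc N)
  have "real (Suc N) powr (-a) \<le> (real (Suc N) powr (1 - a) - real N powr (1 - a)) / (1 - a)"
  proof (cases "N = 0")
    case True
    then show ?thesis using assms by (simp add: field_simps)
  next
    case False
    then show ?thesis using powr_le_diff_powr[of "real N" a] assms by (simp add: add.commute)
  qed
  with Suc.IH show ?case by (simp add: diff_divide_distrib)
qed

lemma sum_powr_tail_le:
  fixes s :: real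
  assumes "1 < s" "1 \<le> N"
  shows "(\<Sum>m\<in>{N<..L}. real m powr (-s)) \<le> real N powr (1 - s) / (s - 1)"
proof -
  have "(\<Sum>m\<in>{N<..L}. real m powr (-s)) \<le> (real N powr (1 - s) - real (max N L) powr (1 - s)) / (s - 1)"
  proof (induction L)
    case 0
    then show ?case by simp
  next
    case (Suc L)
    show ?case
    proof (cases "N \<le> L")
      case True
      have "real (Suc L) powr (-s) \<le> (real (Suc L) powr (1 - s) - real L powr (1 - s)) / (1 - s)"
        using powr_le_diff_powr[of "real L" s] assms True by (simp add: add.commute)
      also have "\<dots> = (real L powr (1 - s) - real (Suc L) powr (1 - s)) / (s - 1)"
        using assms by (simp add: field_simps)
      finally have step: "real (Suc L) powr (-s) \<le> \<dots>" .
      have "{N<..Suc L} = insert (Suc L) {N<..L}" using True by auto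
      then show ?thesis
        using Suc.IH step True by (simp add: max_def diff_divide_distrib)
    next
      case False
      then have "{N<..Suc L} = {}" "max N (Suc L) = N" by auto
      then show ?thesis by simp
    qed
  qed
  also have "\<dots> \<le> real N powr (1 - s) / (s - 1)"
    using assms by (simp add: divide_right_mono)
  finally show ?thesis .
qed

lemma exp_neg_le_powr:
  fixes y p :: real
  assumes "0 < y" "0 < p"
  shows "exp (-y) \<le> (p / y) powr p"
proof -
  have "y / p \<le> exp (y / p)" using exp_ge_add_one_self[of "y / p"] by linarith
  then have "(y / p) powr p \<le> exp (y / p) powr p" using assms by (intro powr_mono2) auto
  also have "exp (y / p) powr p = exp y" using assms by (simp add: powr_def)
  finally have "(y / p) powr p \<le> exp y" .
  moreover have "0 < (y / p) powr p" using assms by simp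
  ultimately have "exp (-y) \<le> 1 / (y / p) powr p" by (simp add: exp_minus field_simps)
  also have "\<dots> = (p / y) powr p" using assms by (simp add: powr_divide)
  finally show ?thesis .
qed

lemma power_le_exp_neg:
  fixes b x :: real
  assumes "0 \<le> b" "b \<le> 1 - x"
  shows "b ^ k \<le> exp (- (real k * x))"
proof -
  have "b \<le> exp (-x)" using exp_ge_add_one_self[of "-x"] assms by linarith
  then have "b ^ k \<le> exp (-x) ^ k" using assms by (intro power_mono) auto
  then show ?thesis by (simp add: exp_of_nat_mult[symmetric])
qed

lemma nat_floor_bounds:
  fixes L :: real
  assumes "1 \<le> L"
  shows "1 \<le> nat \<lfloor>L\<rfloor>" "real (nat \<lfloor>L\<rfloor>) \<le> L" "L \<le> 2 * real (nat \<lfloor>L\<rfloor>)" "L \<le> real (Suc (nat \<lfloor>L\<rfloor>))"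
proof -
  have "1 \<le> \<lfloor>L\<rfloor>" using assms by (simp add: le_floor_iff)
  moreover have "L < real_of_int \<lfloor>L\<rfloor> + 1" by linarith
  ultimately show "1 \<le> nat \<lfloor>L\<rfloor>" "real (nat \<lfloor>L\<rfloor>) \<le> L" "L \<le> 2 * real (nat \<lfloor>L\<rfloor>)"
    "L \<le> real (Suc (nat \<lfloor>L\<rfloor>))" by linarith+
qed

section \<open>A truncated \<open>\<ell>\<^sup>1\<close> norm on power series\<close>

definition fps_norm_upto :: "nat \<Rightarrow> real fps \<Rightarrow> real" where
  "fps_norm_upto K a = (\<Sum>k\<le>K. \<bar>fps_nth a k\<bar>)"

lemma fps_norm_upto_nonneg: "0 \<le> fps_norm_upto K a"
  unfolding fps_norm_upto_def by (simp add: sum_nonneg)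

lemma fps_norm_upto_mono: "K \<le> K' \<Longrightarrow> fps_norm_upto K a \<le> fps_norm_upto K' a"
  unfolding fps_norm_upto_def by (rule sum_mono2) auto

lemma fps_norm_upto_add: "fps_norm_upto K (a + b) \<le> fps_norm_upto K a + fps_norm_upto K b"
  unfolding fps_norm_upto_def sum.distrib[symmetric] by (intro sum_mono) (simp add: abs_triangle_ineq)

lemma fps_norm_upto_diff: "fps_norm_upto K (a - b) \<le> fps_norm_upto K a + fps_norm_upto K b"
  unfolding fps_norm_upto_def sum.distrib[symmetric] by (intro sum_mono) (simp add: abs_triangle_ineq4)

lemma fps_norm_upto_const_mult: "fps_norm_upto K (fps_const c * a) = \<bar>c\<bar> * fps_norm_upto K a"
  unfolding fps_norm_upto_def by (simp add: abs_mult sum_distrib_left)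

lemma fps_norm_upto_sum: "fps_norm_upto K (sum g S) \<le> (\<Sum>i\<in>S. fps_norm_upto K (g i))"
proof (induction S rule: infinite_finite_induct)
  case (insert x F)
  then show ?case using fps_norm_upto_add[of K "g x" "sum g F"] by simp
qed (simp_all add: fps_norm_upto_def)

lemma fps_norm_upto_mult: "fps_norm_upto K (a * b) \<le> fps_norm_upto K a * fps_norm_upto K b"
proof -
  have "fps_norm_upto K (a * b) \<le> (\<Sum>m\<le>K. \<Sum>i\<le>m. \<bar>fps_nth a i\<bar> * \<bar>fps_nth b (m - i)\<bar>)"
    unfolding fps_norm_upto_def fps_mult_nth
    by (intro sum_mono order_trans[OF sum_abs]) (simp add: atLeast0AtMost abs_mult)
  also have "\<dots> = (\<Sum>(i, j)\<in>{(i, j). i + j \<le> K}. \<bar>fps_nth a i\<bar> * \<bar>fps_nth b j\<bar>)"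
    by (rule sum.triangle_reindex_eq[symmetric])
  also have "\<dots> \<le> (\<Sum>(i, j)\<in>{..K} \<times> {..K}. \<bar>fps_nth a i\<bar> * \<bar>fps_nth b j\<bar>)"
    by (rule sum_mono2) auto
  also have "\<dots> = fps_norm_upto K a * fps_norm_upto K b"
    unfolding fps_norm_upto_def by (simp add: sum_product sum.cartesian_product)
  finally show ?thesis .
qed

lemma fps_norm_upto_X_power: "fps_norm_upto K (fps_X ^ i) \<le> 1"
proof -
  have "fps_norm_upto K (fps_X ^ i) = (\<Sum>k\<le>K. if k = i then 1 else 0)"
    unfolding fps_norm_upto_def by (rule sum.cong) auto
  then show ?thesis by simp
qed

lemma fps_norm_upto_power: "fps_norm_upto K (a ^ n) \<le> fps_norm_upto K a ^ n"
proof (induction n)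
  case 0
  then show ?case using fps_norm_upto_X_power[of K 0] by simp
next
  case (Suc n)
  have "fps_norm_upto K (a ^ Suc n) \<le> fps_norm_upto K a * fps_norm_upto K (a ^ n)"
    by (simp add: fps_norm_upto_mult)
  also have "\<dots> \<le> fps_norm_upto K a * fps_norm_upto K a ^ n"
    using Suc fps_norm_upto_nonneg by (intro mult_left_mono) auto
  finally show ?case by simp
qed

lemma fps_norm_upto_cutoff: "fps_norm_upto K (fps_cutoff N a) \<le> fps_norm_upto K a"
  unfolding fps_norm_upto_def by (intro sum_mono) simp

lemma fps_norm_upto_eqI:
  assumes "fps_X ^ Suc K dvd a - b"
  shows "fps_norm_upto K a = fps_norm_upto K b"
proof -
  obtain h where h: "a - b = fps_X ^ Suc K * h" using assms by (elim dvdE)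
  have "fps_nth a k = fps_nth b k" if "k \<le> K" for k
  proof -
    have "fps_nth (fps_X ^ Suc K * h) k = 0" using that by (subst fps_X_power_mult_nth) simp
    then have "fps_nth (a - b) k = 0" by (simp only: h)
    then show ?thesis by simp
  qed
  then show ?thesis unfolding fps_norm_upto_def by (intro sum.cong) auto
qed

lemma X_power_dvd_power_diff_cutoff:
  fixes a :: "'a::comm_ring_1 fps"
  shows "fps_X ^ N dvd a ^ n - fps_cutoff N a ^ n"
proof -
  have "a - fps_cutoff N a = fps_X ^ N * fps_shift N a"
    using fps_shift_cutoff'[of N a] by (metis add_diff_cancel)
  then have "fps_X ^ N dvd a - fps_cutoff N a" by simp
  then show ?thesis by (simp add: power_diff_sumr2)
qed

lemma fps_norm_upto_power_diff:
  assumes "fps_norm_upto K x \<le> q" "fps_norm_upto K y \<le> q"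
  shows "fps_norm_upto K (c * (x ^ n - y ^ n)) \<le> fps_norm_upto K (c * (x - y)) * (real n * q ^ (n - 1))"
proof -
  have q: "0 \<le> q" using assms(1) fps_norm_upto_nonneg order_trans by blast
  have "fps_norm_upto K (y ^ (n - Suc i) * x ^ i) \<le> q ^ (n - 1)" if "i < n" for i
  proof -
    have "fps_norm_upto K (y ^ (n - Suc i) * x ^ i) \<le> fps_norm_upto K y ^ (n - Suc i) * fps_norm_upto K x ^ i"
      by (intro order_trans[OF fps_norm_upto_mult] mult_mono fps_norm_upto_power fps_norm_upto_nonneg
          zero_le_power)
    also have "\<dots> \<le> q ^ (n - Suc i) * q ^ i"
      by (intro mult_mono power_mono assms fps_norm_upto_nonneg zero_le_power q)
    also have "\<dots> = q ^ (n - 1)" using that by (simp flip: power_add)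
    finally show ?thesis .
  qed
  then have sum: "fps_norm_upto K (\<Sum>i<n. y ^ (n - Suc i) * x ^ i) \<le> real n * q ^ (n - 1)"
    using sum_mono[of "{..<n}" "\<lambda>i. fps_norm_upto K (y ^ (n - Suc i) * x ^ i)" "\<lambda>_. q ^ (n - 1)"]
    by (intro order_trans[OF fps_norm_upto_sum]) auto
  have "fps_norm_upto K (c * (x ^ n - y ^ n))
      = fps_norm_upto K (c * (x - y) * (\<Sum>i<n. y ^ (n - Suc i) * x ^ i))"
    by (simp add: power_diff_sumr2 mult.assoc)
  also have "\<dots> \<le> fps_norm_upto K (c * (x - y)) * fps_norm_upto K (\<Sum>i<n. y ^ (n - Suc i) * x ^ i)"
    by (rule fps_norm_upto_mult)
  also have "\<dots> \<le> fps_norm_upto K (c * (x - y)) * (real n * q ^ (n - 1))"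
    by (intro mult_left_mono sum fps_norm_upto_nonneg)
  finally show ?thesis .
qed

lemma fps_norm_upto_sum_X_powers: "fps_norm_upto K (\<Sum>i\<in>A. fps_X ^ i) \<le> real (card A)"
  using sum_mono[of A "\<lambda>i. fps_norm_upto K (fps_X ^ i)" "\<lambda>_. 1"]
  by (intro order_trans[OF fps_norm_upto_sum]) (simp add: fps_norm_upto_X_power)

lemma fps_norm_upto_one_minus_X_power_mult:
  "fps_norm_upto K ((1 - fps_X ^ j) * g) \<le> real j * fps_norm_upto K ((1 - fps_X) * g)"
proof -
  have "(1 - fps_X ^ j) * g = (\<Sum>i<j. fps_X ^ i) * ((1 - fps_X) * g)"
    by (simp add: one_diff_power_eq mult_ac)
  then have "fps_norm_upto K ((1 - fps_X ^ j) * g)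
      \<le> fps_norm_upto K (\<Sum>i<j. fps_X ^ i) * fps_norm_upto K ((1 - fps_X) * g)"
    by (simp only: fps_norm_upto_mult)
  also have "\<dots> \<le> real j * fps_norm_upto K ((1 - fps_X) * g)"
    using fps_norm_upto_sum_X_powers[of K "{..<j}"] by (intro mult_right_mono fps_norm_upto_nonneg) simp
  finally show ?thesis .
qed

lemma fps_norm_upto_one_minus_X_power_mult_le_2:
  "fps_norm_upto K ((1 - fps_X ^ j) * g) \<le> 2 * fps_norm_upto K g"
proof -
  have "fps_norm_upto K (1 - fps_X ^ j) \<le> 2"
    using fps_norm_upto_diff[of K 1 "fps_X ^ j"] fps_norm_upto_X_power[of K 0]
      fps_norm_upto_X_power[of K j] by simp
  then show ?thesis
    by (meson fps_norm_upto_mult fps_norm_upto_nonneg mult_right_mono order_trans)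
qed

lemma fps_norm_upto_le_one_minus_X_mult:
  "fps_norm_upto K g \<le> real (Suc K) * fps_norm_upto K ((1 - fps_X) * g)"
proof -
  have "fps_X ^ Suc K dvd g - (1 - fps_X ^ Suc K) * g" by (simp add: algebra_simps)
  then have "fps_norm_upto K g = fps_norm_upto K ((1 - fps_X ^ Suc K) * g)"
    by (rule fps_norm_upto_eqI)
  then show ?thesis using fps_norm_upto_one_minus_X_power_mult[of K "Suc K" g] by simp
qed

definition fps_X_sum :: "nat \<Rightarrow> real fps" where
  "fps_X_sum m = (\<Sum>i=1..m. fps_X ^ i)"

lemma fps_norm_upto_X_sum: "fps_norm_upto K (fps_X_sum m) \<le> real m"
  using fps_norm_upto_sum_X_powers[of K "{1..m}"] by (simp add: fps_X_sum_def)

lemma one_minus_X_mult_X_sum: "(1 - fps_X) * fps_X_sum m = fps_X - fps_X ^ Suc m"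
proof (induction m)
  case 0
  then show ?case by (simp add: fps_X_sum_def)
next
  case (Suc m)
  have "(1 - fps_X) * fps_X_sum (Suc m) = (1 - fps_X) * fps_X_sum m + (1 - fps_X) * fps_X ^ Suc m"
    by (simp add: fps_X_sum_def distrib_left)
  also have "\<dots> = fps_X - fps_X ^ Suc (Suc m)"
    unfolding Suc.IH by (simp only: left_diff_distrib mult_1_left power_Suc[of fps_X "Suc m"]) simp
  finally show ?case .
qed

lemma fps_norm_upto_one_minus_X_X_sum:
  "fps_norm_upto K ((1 - fps_X) * (fps_const c * fps_X_sum m)) \<le> 2 * \<bar>c\<bar>"
proof -
  have "(1 - fps_X) * (fps_const c * fps_X_sum m) = fps_const c * (fps_X ^ 1 - fps_X ^ Suc m)"
    by (metis one_minus_X_mult_X_sum mult.left_commute power_one_right)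
  then have "fps_norm_upto K ((1 - fps_X) * (fps_const c * fps_X_sum m))
      = \<bar>c\<bar> * fps_norm_upto K (fps_X ^ 1 - fps_X ^ Suc m)"
    by (simp only: fps_norm_upto_const_mult)
  also have "\<dots> \<le> \<bar>c\<bar> * 2"
    using fps_norm_upto_diff[of K "fps_X ^ 1" "fps_X ^ Suc m"] fps_norm_upto_X_power[of K]
    by (intro mult_left_mono) (smt (verit), simp)
  finally show ?thesis by simp
qed

lemma fps_const_sum: "fps_const (\<Sum>i\<in>A. h i) = (\<Sum>i\<in>A. fps_const (h i))"
  by (induction A rule: infinite_finite_induct) (simp_all flip: fps_const_add)

locale nonincreasing_prob_seq =
  fixes f :: "nat \<Rightarrow> real"
  assumes f_0: "f 0 = 0"
    and f_nonneg: "0 \<le> f m"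
    and f_antimono: "1 \<le> m \<Longrightarrow> f (Suc m) \<le> f m"
    and f_sums: "f sums 1"
begin

definition gf :: "real fps" where
  "gf = Abs_fps f"

lemma sum_le_one: "(\<Sum>m=1..N. f m) \<le> 1"
proof -
  have "(\<Sum>m=1..N. f m) \<le> sum f {..<Suc N}"
    by (rule sum_mono2) (auto simp: f_nonneg)
  also have "\<dots> \<le> suminf f"
    using f_sums f_nonneg by (intro sum_le_suminf) (auto simp: sums_iff)
  finally show ?thesis using f_sums by (simp add: sums_iff)
qed

lemma fps_norm_upto_gf_power: "fps_norm_upto K (gf ^ n) \<le> 1"
proof -
  have "fps_norm_upto K gf = (\<Sum>m=1..K. f m)"
    unfolding fps_norm_upto_def gf_def using f_0 f_nonneg
    by (simp add: atMost_atLeast0 sum.atLeast_Suc_atMost)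
  then have "fps_norm_upto K gf \<le> 1" using sum_le_one by simp
  then show ?thesis
    using fps_norm_upto_power[of K gf n] power_le_one[OF fps_norm_upto_nonneg] by (meson order_trans)
qed

lemma fps_cutoff_gf: "fps_cutoff (Suc K) gf = (\<Sum>j=1..K. fps_const (f j) * fps_X ^ j)"
proof -
  have "fps_nth (\<Sum>j=1..K. fps_const (f j) * fps_X ^ j) k = (if k \<in> {1..K} then f k else 0)" for k
    unfolding fps_sum_nth by (simp add: if_distrib[of "\<lambda>x. f _ * x"] cong: if_cong)
  then show ?thesis
    by (intro fps_ext) (auto simp: gf_def f_0 not_less_eq_eq)
qed

lemma fps_norm_upto_one_minus_gf_mult:
  "fps_norm_upto K ((1 - gf) * g)
    \<le> (\<Sum>j=1..K. f j * fps_norm_upto K ((1 - fps_X ^ j) * g)) + (1 - (\<Sum>j=1..K. f j)) * fps_norm_upto K g"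
proof -
  define T where "T = 1 - (\<Sum>j=1..K. f j)"
  have T: "0 \<le> T" unfolding T_def using sum_le_one by simp
  have "(1 - gf) * g - (1 - fps_cutoff (Suc K) gf) * g = (gf ^ 1 - fps_cutoff (Suc K) gf ^ 1) * (- g)"
    by (simp add: algebra_simps)
  then have "fps_X ^ Suc K dvd (1 - gf) * g - (1 - fps_cutoff (Suc K) gf) * g"
    by (simp only: dvd_mult2 X_power_dvd_power_diff_cutoff)
  then have "fps_norm_upto K ((1 - gf) * g) = fps_norm_upto K ((1 - fps_cutoff (Suc K) gf) * g)"
    by (rule fps_norm_upto_eqI)
  also have "(1 - fps_cutoff (Suc K) gf) * g
      = (\<Sum>j=1..K. fps_const (f j) * ((1 - fps_X ^ j) * g)) + fps_const T * g"
    unfolding fps_cutoff_gf T_def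
    by (simp add: algebra_simps sum_distrib_left sum_distrib_right sum_subtractf fps_const_sum
        flip: fps_const_sub)
  also have "fps_norm_upto K \<dots> \<le> (\<Sum>j=1..K. fps_norm_upto K (fps_const (f j) * ((1 - fps_X ^ j) * g)))
      + fps_norm_upto K (fps_const T * g)"
    by (intro order_trans[OF fps_norm_upto_add] add_mono fps_norm_upto_sum order_refl)
  also have "\<dots> = (\<Sum>j=1..K. f j * fps_norm_upto K ((1 - fps_X ^ j) * g)) + T * fps_norm_upto K g"
    using T by (simp add: fps_norm_upto_const_mult f_nonneg)
  finally show ?thesis unfolding T_def .
qed

subsection \<open>Abel summation\<close>

definition abel_part :: "nat \<Rightarrow> real fps" where
  "abel_part m = (\<Sum>i\<in>{1..<m}. fps_const (f i - f (Suc i)) * fps_X_sum i)"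

definition abel_weight :: "nat \<Rightarrow> real" where
  "abel_weight m = (\<Sum>i\<in>{1..<m}. real i * (f i - f (Suc i)))"

definition abel_term :: "nat \<Rightarrow> nat \<Rightarrow> real" where
  "abel_term n m = 2 * (f m - f (Suc m)) * (real n * abel_weight (Suc m) ^ (n - 1))"

lemma abel_part_Suc:
  "1 \<le> m \<Longrightarrow> abel_part (Suc m) = abel_part m + fps_const (f m - f (Suc m)) * fps_X_sum m"
  by (simp add: abel_part_def)

lemma fps_cutoff_gf_eq_abel:
  "1 \<le> M \<Longrightarrow> fps_cutoff (Suc M) gf = abel_part M + fps_const (f M) * fps_X_sum M"
proof (induction M rule: nat_induct_at_least)
  case base
  then show ?case by (simp add: fps_cutoff_gf abel_part_def fps_X_sum_def)
next
  case (Suc M)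
  then show ?case
    by (simp add: fps_cutoff_gf abel_part_Suc fps_X_sum_def algebra_simps flip: fps_const_sub)
qed

lemma abel_weight_Suc: "abel_weight (Suc m) = (\<Sum>i=1..m. f i) - real m * f (Suc m)"
proof (induction m)
  case (Suc m)
  then show ?case by (simp add: abel_weight_def algebra_simps)
qed (simp add: abel_weight_def)

lemma abel_weight_nonneg: "0 \<le> abel_weight m"
  unfolding abel_weight_def using f_antimono by (intro sum_nonneg) auto

lemma abel_weight_mono: "abel_weight m \<le> abel_weight (Suc m)"
  unfolding abel_weight_def using f_antimono by (cases m) auto

lemma abel_weight_le_one: "abel_weight m \<le> 1"
proof (cases m)
  case (Suc m')
  have "0 \<le> real m' * f (Suc m')" using f_nonneg by simp
  then show ?thesis using Suc abel_weight_Suc[of m'] sum_le_one[of m'] by simp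
qed (simp add: abel_weight_def)

lemma fps_norm_upto_abel_part: "fps_norm_upto K (abel_part m) \<le> abel_weight m"
proof -
  have "fps_norm_upto K (abel_part m) \<le> (\<Sum>i\<in>{1..<m}. fps_norm_upto K (fps_const (f i - f (Suc i)) * fps_X_sum i))"
    unfolding abel_part_def by (rule fps_norm_upto_sum)
  also have "\<dots> \<le> abel_weight m"
    unfolding abel_weight_def fps_norm_upto_const_mult
  proof (intro sum_mono)
    fix i assume "i \<in> {1..<m}"
    then have "0 \<le> f i - f (Suc i)" using f_antimono by simp
    then show "\<bar>f i - f (Suc i)\<bar> * fps_norm_upto K (fps_X_sum i) \<le> real i * (f i - f (Suc i))"
      using fps_norm_upto_X_sum[of K i] by (simp add: mult.commute mult_right_mono)
  qed
  finally show ?thesis .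
qed

lemma fps_norm_upto_abel_step:
  assumes "1 \<le> m"
  shows "fps_norm_upto K ((1 - fps_X) * (abel_part (Suc m) ^ n - abel_part m ^ n)) \<le> abel_term n m"
proof -
  have "fps_norm_upto K ((1 - fps_X) * (abel_part (Suc m) ^ n - abel_part m ^ n))
      \<le> fps_norm_upto K ((1 - fps_X) * (abel_part (Suc m) - abel_part m))
          * (real n * abel_weight (Suc m) ^ (n - 1))"
    using fps_norm_upto_abel_part[of K m] abel_weight_mono[of m]
    by (intro fps_norm_upto_power_diff fps_norm_upto_abel_part) auto
  also have "\<dots> \<le> abel_term n m"
    unfolding abel_term_def
  proof (rule mult_right_mono)
    show "fps_norm_upto K ((1 - fps_X) * (abel_part (Suc m) - abel_part m)) \<le> 2 * (f m - f (Suc m))"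
      using fps_norm_upto_one_minus_X_X_sum[of K "f m - f (Suc m)" m] f_antimono[OF assms]
      by (simp add: abel_part_Suc[OF assms])
  qed (simp add: abel_weight_nonneg)
  finally show ?thesis .
qed

lemma fps_norm_upto_abel_last:
  assumes "1 \<le> M"
  shows "fps_norm_upto K ((1 - fps_X) * (fps_cutoff (Suc M) gf ^ n - abel_part M ^ n)) \<le> 2 * f M * real n"
proof -
  have "fps_norm_upto K (fps_cutoff (Suc M) gf) \<le> 1"
    using fps_norm_upto_cutoff fps_norm_upto_gf_power[of K 1] by (metis order_trans power_one_right)
  moreover have "fps_norm_upto K (abel_part M) \<le> 1"
    using fps_norm_upto_abel_part abel_weight_le_one order_trans by blast
  ultimately have "fps_norm_upto K ((1 - fps_X) * (fps_cutoff (Suc M) gf ^ n - abel_part M ^ n))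
      \<le> fps_norm_upto K ((1 - fps_X) * (fps_cutoff (Suc M) gf - abel_part M)) * (real n * 1 ^ (n - 1))"
    by (rule fps_norm_upto_power_diff)
  also have "fps_cutoff (Suc M) gf - abel_part M = fps_const (f M) * fps_X_sum M"
    using fps_cutoff_gf_eq_abel[OF assms] by simp
  also have "fps_norm_upto K ((1 - fps_X) * (fps_const (f M) * fps_X_sum M)) * (real n * 1 ^ (n - 1))
      \<le> 2 * f M * real n"
    using fps_norm_upto_one_minus_X_X_sum[of K "f M" M] f_nonneg[of M] by (simp add: mult_right_mono)
  finally show ?thesis .
qed

lemma fps_norm_upto_one_minus_X_gf_power:
  assumes "1 \<le> n" "1 \<le> M" "K \<le> M"
  shows "fps_norm_upto K ((1 - fps_X) * gf ^ n) \<le> (\<Sum>m\<in>{1..<M}. abel_term n m) + 2 * f M * real n"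
proof -
  let ?P = "fps_cutoff (Suc M) gf"
  let ?D = "\<lambda>m. (1 - fps_X) * (abel_part (Suc m) ^ n - abel_part m ^ n)"
  have "fps_X ^ Suc K dvd fps_X ^ Suc M" using assms by (intro le_imp_power_dvd) simp
  then have "fps_X ^ Suc K dvd (1 - fps_X) * gf ^ n - (1 - fps_X) * ?P ^ n"
    by (metis X_power_dvd_power_diff_cutoff dvd_mult dvd_trans right_diff_distrib)
  then have "fps_norm_upto K ((1 - fps_X) * gf ^ n) = fps_norm_upto K ((1 - fps_X) * ?P ^ n)"
    by (rule fps_norm_upto_eqI)
  also have "(1 - fps_X) * ?P ^ n = (1 - fps_X) * (?P ^ n - abel_part M ^ n) + (1 - fps_X) * abel_part M ^ n"
    by (simp only: distrib_left[symmetric] diff_add_cancel)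
  also have "(1 - fps_X) * abel_part M ^ n = (\<Sum>m\<in>{1..<M}. ?D m)"
  proof -
    have "abel_part 1 ^ n = 0" using assms(1) by (simp add: abel_part_def)
    then have "(\<Sum>m\<in>{1..<M}. abel_part (Suc m) ^ n - abel_part m ^ n) = abel_part M ^ n"
      using sum_Suc_diff'[of 1 M "\<lambda>m. abel_part m ^ n"] assms(2) by simp
    then show ?thesis by (simp only: sum_distrib_left[symmetric])
  qed
  also have "fps_norm_upto K ((1 - fps_X) * (?P ^ n - abel_part M ^ n) + (\<Sum>m\<in>{1..<M}. ?D m))
      \<le> 2 * f M * real n + (\<Sum>m\<in>{1..<M}. abel_term n m)"
  proof (rule order_trans[OF fps_norm_upto_add add_mono])
    show "fps_norm_upto K ((1 - fps_X) * (?P ^ n - abel_part M ^ n)) \<le> 2 * f M * real n"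
      by (rule fps_norm_upto_abel_last[OF assms(2)])
    show "fps_norm_upto K (\<Sum>m\<in>{1..<M}. ?D m) \<le> (\<Sum>m\<in>{1..<M}. abel_term n m)"
      by (rule order_trans[OF fps_norm_upto_sum sum_mono]) (simp add: fps_norm_upto_abel_step)
  qed
  finally show ?thesis by simp
qed

end

section \<open>Convolution powers as power series coefficients\<close>

lemma conv_zero_if_neg:
  assumes "\<And>k. k < 0 \<Longrightarrow> F k = 0" "\<And>k. k < 0 \<Longrightarrow> G k = 0" "k < 0"
  shows "conv F G k = 0"
proof -
  have "F j * G (k - j) = 0" for j
  proof (cases "j < 0")
    case True
    then show ?thesis using assms(1) by simp
  next
    case False
    then show ?thesis using assms(2,3) by simp
  qed
  then have "(\<lambda>j. F j * G (k - j)) = (\<lambda>_. 0)" by (rule ext)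
  then show ?thesis unfolding conv_def by simp
qed

lemma conv_eq_fps_mult:
  assumes F: "\<And>k. k < 0 \<Longrightarrow> F k = 0" and G: "\<And>k. k < 0 \<Longrightarrow> G k = 0"
  shows "conv F G (int m) = fps_nth (Abs_fps (\<lambda>i. F (int i)) * Abs_fps (\<lambda>i. G (int i))) m"
proof -
  have "F j * G (int m - j) = 0" if "j \<notin> {0..int m}" for j
    using that F G by (cases "j < 0") auto
  then have "conv F G (int m) = (\<Sum>j\<in>{0..int m}. F j * G (int m - j))"
    unfolding conv_def by (subst infsum_cong_neutral[of "{0..int m}"]) auto
  also have "\<dots> = (\<Sum>j\<in>int ` {0..m}. F j * G (int m - j))"
    by (simp add: image_int_atLeastAtMost)
  also have "\<dots> = (\<Sum>i=0..m. F (int i) * G (int (m - i)))"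
    by (simp add: sum.reindex of_nat_diff)
  also have "\<dots> = fps_nth (Abs_fps (\<lambda>i. F (int i)) * Abs_fps (\<lambda>i. G (int i))) m"
    by (simp add: fps_mult_nth)
  finally show ?thesis .
qed

lemma conv_pow_zero_if_neg:
  assumes "\<And>k. k < 0 \<Longrightarrow> F k = 0" "k < 0"
  shows "conv_pow F n k = 0"
  using assms(2)
proof (induction n arbitrary: k)
  case (Suc n)
  then show ?case using assms(1) by (simp add: conv_zero_if_neg)
qed simp

lemma conv_pow_eq_fps_power:
  assumes "\<And>k. k < 0 \<Longrightarrow> F k = 0"
  shows "conv_pow F n (int m) = fps_nth (Abs_fps (\<lambda>i. F (int i)) ^ n) m"
proof (induction n arbitrary: m)
  case (Suc n)
  have "Abs_fps (\<lambda>i. conv_pow F n (int i)) = Abs_fps (\<lambda>i. F (int i)) ^ n"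
    using Suc.IH by (simp add: fps_eq_iff)
  then show ?case
    using conv_eq_fps_mult[OF assms conv_pow_zero_if_neg[OF assms]] by simp
qed simp

lemma prob_ZplusI:
  assumes nonneg: "\<And>k. 0 \<le> F k" and neg: "\<And>k. k < 0 \<Longrightarrow> F k = 0"
    and sums: "(\<lambda>m. F (int m)) sums 1"
  shows "F \<in> prob_Zplus"
proof -
  have "((\<lambda>m. F (int m)) has_sum 1) UNIV"
    using sums nonneg by (rule sums_nonneg_imp_has_sum)
  then have "(F has_sum 1) (range int)"
    by (subst has_sum_reindex) (auto simp: comp_def)
  moreover have "x < 0" if "x \<notin> range int" for x
    using that by (metis nonneg_int_cases not_less rangeI)
  then have "(F has_sum 1) (range int) \<longleftrightarrow> (F has_sum 1) UNIV"
    by (intro has_sum_cong_neutral) (auto simp: neg)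
  ultimately have has_sum: "(F has_sum 1) UNIV" by blast
  have "F k \<le> 1" for k
  proof (cases "k < 0")
    case False
    then obtain m where "k = int m" by (metis nonneg_int_cases not_less)
    moreover have "sum (\<lambda>m. F (int m)) {m} \<le> 1"
      using sum_le_suminf[OF sums_summable[OF sums], of "{m}"] sums nonneg by (simp add: sums_iff)
    ultimately show ?thesis by simp
  qed (simp add: neg)
  with has_sum nonneg neg show ?thesis unfolding prob_Zplus_def by auto
qed

lemma infsum_le_if_partial_sums_le:
  fixes h :: "int \<Rightarrow> real"
  assumes nonneg: "\<And>k. 0 \<le> h k" and neg: "\<And>k. k < 0 \<Longrightarrow> h k = 0"
    and partial: "\<And>K. (\<Sum>m\<le>K. h (int m)) \<le> B"
  shows "(\<Sum>\<^sub>\<infinity>k. h k) \<le> B"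
proof (cases "h summable_on UNIV")
  case True
  then show ?thesis
  proof (rule infsum_le_finite_sums)
    fix S :: "int set" assume S: "finite S" "S \<subseteq> UNIV"
    define K where "K = nat (Max (insert 0 S))"
    have "x \<in> int ` {..K}" if "x \<in> S" "h x \<noteq> 0" for x
    proof -
      have "0 \<le> x" using that neg by (meson not_le)
      moreover have "x \<le> Max (insert 0 S)" using S(1) that by simp
      then have "nat x \<le> K" unfolding K_def by (simp add: nat_mono)
      ultimately show ?thesis by (auto intro: image_eqI[of x int "nat x"])
    qed
    then have "sum h S = sum h (S \<inter> int ` {..K})"
      using S(1) by (intro sum.mono_neutral_right) auto
    also have "\<dots> \<le> sum h (int ` {..K})"
      using nonneg by (intro sum_mono2) auto
    also have "\<dots> = (\<Sum>m\<le>K. h (int m))"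
      by (simp add: sum.reindex)
    also have "\<dots> \<le> B" by (rule partial)
    finally show "sum h S \<le> B" .
  qed
next
  case False
  then show ?thesis
    using partial[of 0] nonneg[of 0] by (simp add: infsum_not_exists)
qed

lemma class_AI:
  assumes F: "F \<in> prob_Zplus"
    and bound: "\<And>n K. 1 \<le> n \<Longrightarrow>
      fps_norm_upto K (Abs_fps (\<lambda>i. F (int i)) ^ n - Abs_fps (\<lambda>i. F (int i)) ^ Suc n) \<le> B / real n"
  shows "F \<in> class_A"
proof -
  have neg: "F k = 0" if "k < 0" for k using F that by (simp add: prob_Zplus_def)
  have "real n * (\<Sum>\<^sub>\<infinity>k. \<bar>conv_pow F n k - conv_pow F (Suc n) k\<bar>) \<le> B" if n: "n \<in> {1..}" for n
  proof -
    have "(\<Sum>\<^sub>\<infinity>k. \<bar>conv_pow F n k - conv_pow F (Suc n) k\<bar>) \<le> B / real n"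
    proof (rule infsum_le_if_partial_sums_le)
      fix K
      have "\<bar>conv_pow F n (int m) - conv_pow F (Suc n) (int m)\<bar>
          = \<bar>fps_nth (Abs_fps (\<lambda>i. F (int i)) ^ n - Abs_fps (\<lambda>i. F (int i)) ^ Suc n) m\<bar>" for m
        by (simp only: conv_pow_eq_fps_power[OF neg] fps_sub_nth)
      then show "(\<Sum>m\<le>K. \<bar>conv_pow F n (int m) - conv_pow F (Suc n) (int m)\<bar>) \<le> B / real n"
        using bound[of n K] n by (simp add: fps_norm_upto_def)
    qed (simp_all add: conv_pow_zero_if_neg[OF neg] del: conv_pow.simps)
    then show ?thesis using n by (simp add: pos_le_divide_eq mult.commute)
  qed
  then have "bdd_above ((\<lambda>n. real n * (\<Sum>\<^sub>\<infinity>k. \<bar>conv_pow F n k - conv_pow F (Suc n) k\<bar>)) ` {1..})"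
    by (rule bdd_aboveI2)
  with F show ?thesis unfolding class_A_def by blast
qed

section \<open>The zeta distribution\<close>

locale zeta_seq =
  fixes \<alpha> :: real
  assumes \<alpha>_pos: "0 < \<alpha>" and \<alpha>_lt_1: "\<alpha> < 1"
begin

definition c :: real where
  "c = 1 / zeta_real (1 + \<alpha>)"

definition Z :: "nat \<Rightarrow> real" where
  "Z m = (if m = 0 then 0 else c * real m powr (-1 - \<alpha>))"

lemma powr_minus_one_minus: "x powr (-1 - \<alpha>) = 1 / x powr (1 + \<alpha>)"
  using powr_minus_divide[of x "1 + \<alpha>"] by (simp add: minus_add_distrib)

lemma zeta_real_sums: "(\<lambda>n. 1 / real (Suc n) powr (1 + \<alpha>)) sums zeta_real (1 + \<alpha>)"
proof -
  have "summable (\<lambda>n. real n powr (-(1 + \<alpha>)))" using \<alpha>_pos by (simp add: summable_real_powr_iff)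
  then have "summable (\<lambda>n. real (Suc n) powr (-(1 + \<alpha>)))" by (subst summable_Suc_iff)
  then show ?thesis unfolding zeta_real_def by (simp add: powr_minus_one_minus summable_sums)
qed

lemma zeta_real_ge_one: "1 \<le> zeta_real (1 + \<alpha>)"
  using sum_le_suminf[OF sums_summable[OF zeta_real_sums], of "{0}"] zeta_real_sums
  by (simp add: sums_iff)

lemma c_pos: "0 < c"
  using zeta_real_ge_one by (simp add: c_def)

lemma Z_sums: "Z sums 1"
proof -
  have "(\<lambda>n. c * (1 / real (Suc n) powr (1 + \<alpha>))) sums (c * zeta_real (1 + \<alpha>))"
    by (rule sums_mult[OF zeta_real_sums])
  then have "(\<lambda>n. Z (Suc n)) sums 1"
    using zeta_real_ge_one by (simp add: Z_def c_def powr_minus_one_minus)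
  then have "Z sums (1 + Z 0)" by (simp only: sums_Suc_iff)
  then show ?thesis by (simp add: Z_def)
qed

lemma Z_antimono: "1 \<le> m \<Longrightarrow> Z (Suc m) \<le> Z m"
  using c_pos \<alpha>_pos by (auto simp: Z_def intro!: mult_left_mono powr_mono2')

sublocale nonincreasing_prob_seq Z
  by unfold_locales (use Z_sums Z_antimono c_pos in \<open>auto simp: Z_def\<close>)

lemma Z_diff_le: "1 \<le> m \<Longrightarrow> Z m - Z (Suc m) \<le> c * (1 + \<alpha>) * real m powr (-2 - \<alpha>)"
proof -
  assume m: "1 \<le> m"
  have e: "-(1 + \<alpha>) - 1 = -2 - \<alpha>" "-(1 + \<alpha>) = -1 - \<alpha>" "real m + 1 = real (Suc m)"
    by simp_all
  have "real m powr (-1 - \<alpha>) - real (Suc m) powr (-1 - \<alpha>) \<le> (1 + \<alpha>) * real m powr (-2 - \<alpha>)"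
    using powr_diff_le[of "real m" "1 + \<alpha>"] m \<alpha>_pos unfolding e by simp
  then show ?thesis
    using m c_pos by (simp add: Z_def right_diff_distrib[symmetric] mult.assoc mult_left_mono)
qed

lemma Z_tail_le:
  assumes "1 \<le> K"
  shows "1 - (\<Sum>m=1..K. Z m) \<le> c * real K powr (-\<alpha>) / \<alpha>"
proof -
  have sm: "summable Z" using Z_sums by (rule sums_summable)
  have "(\<Sum>m=1..K. Z m) = sum Z {..<Suc K}"
    unfolding sum.lessThan_Suc_shift sum_bounds_lt_plus1 by (simp add: f_0)
  then have "1 - (\<Sum>m=1..K. Z m) = (\<Sum>n. Z (n + Suc K))"
    using suminf_split_initial_segment[OF sm, of "Suc K"] Z_sums by (simp add: sums_iff)
  also have "\<dots> \<le> c * real K powr (-\<alpha>) / \<alpha>"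
  proof (rule suminf_le_const)
    show "summable (\<lambda>n. Z (n + Suc K))" using sm by (rule summable_ignore_initial_segment)
    fix L
    have "(\<Sum>n<L. Z (n + Suc K)) = (\<Sum>m\<in>{0 + Suc K..<L + Suc K}. Z m)"
      unfolding sum.shift_bounds_nat_ivl by (simp add: atLeast0LessThan)
    also have "{0 + Suc K..<L + Suc K} = {K<..K + L}" by auto
    also have "(\<Sum>m\<in>{K<..K + L}. Z m) = c * (\<Sum>m\<in>{K<..K + L}. real m powr (-(1 + \<alpha>)))"
      by (simp add: Z_def sum_distrib_left minus_add_distrib)
    also have "\<dots> \<le> c * (real K powr (1 - (1 + \<alpha>)) / ((1 + \<alpha>) - 1))"
      using sum_powr_tail_le[of "1 + \<alpha>" K] assms \<alpha>_pos c_pos by (intro mult_left_mono) auto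
    finally show "(\<Sum>n<L. Z (n + Suc K)) \<le> c * real K powr (-\<alpha>) / \<alpha>" by simp
  qed
  finally show ?thesis .
qed

definition \<kappa> :: real where
  "\<kappa> = c * 2 powr (-1 - \<alpha>)"

lemma \<kappa>_pos: "0 < \<kappa>"
  using c_pos by (simp add: \<kappa>_def)

lemma \<kappa>_le: "1 \<le> m \<Longrightarrow> \<kappa> * real m powr (-\<alpha>) \<le> real m * Z (Suc m)"
proof -
  assume m: "1 \<le> m"
  have "(2 * real m) powr (-1 - \<alpha>) \<le> real (Suc m) powr (-1 - \<alpha>)"
    using m \<alpha>_pos by (intro powr_mono2') auto
  then have le: "2 powr (-1 - \<alpha>) * real m powr (-1 - \<alpha>) \<le> real (Suc m) powr (-1 - \<alpha>)"
    by (simp add: powr_mult)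
  have "real m * real m powr (-1 - \<alpha>) = real m powr (-\<alpha>)"
    using powr_mult_base[of "real m" "-1 - \<alpha>"] m by simp
  then have "\<kappa> * real m powr (-\<alpha>) = c * (real m * (2 powr (-1 - \<alpha>) * real m powr (-1 - \<alpha>)))"
    unfolding \<kappa>_def by (simp add: algebra_simps)
  also have "\<dots> \<le> c * (real m * real (Suc m) powr (-1 - \<alpha>))"
    using le c_pos by (intro mult_left_mono) auto
  also have "\<dots> = real m * Z (Suc m)"
    by (simp add: Z_def)
  finally show ?thesis .
qed

lemma abel_weight_power_le:
  assumes "2 \<le> n" "1 \<le> m"
  shows "abel_weight (Suc m) ^ (n - 1) \<le> exp (- (real n / 2 * (\<kappa> * real m powr (-\<alpha>))))"
proof -
  have "abel_weight (Suc m) \<le> 1 - \<kappa> * real m powr (-\<alpha>)"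
    using abel_weight_Suc[of m] sum_le_one[of m] \<kappa>_le[OF assms(2)] by linarith
  then have "abel_weight (Suc m) ^ (n - 1) \<le> exp (- (real (n - 1) * (\<kappa> * real m powr (-\<alpha>))))"
    by (intro power_le_exp_neg abel_weight_nonneg)
  also have "\<dots> \<le> exp (- (real n / 2 * (\<kappa> * real m powr (-\<alpha>))))"
    using assms \<kappa>_pos by (auto simp: of_nat_diff intro!: mult_right_mono)
  finally show ?thesis .
qed

lemma abel_term_le:
  obtains A where "0 \<le> A"
    "\<And>n m. 2 \<le> n \<Longrightarrow> 1 \<le> m \<Longrightarrow> abel_term n m \<le> A * real n powr (-2 / \<alpha>)"
proof
  \<comment> \<open>\<open>p\<close> is chosen so that the powers of \<open>m\<close> cancel: \<open>m powr (-2 - \<alpha>) * (m powr \<alpha>) powr p = 1\<close>.\<close>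
  define p where "p = (2 + \<alpha>) / \<alpha>"
  have p: "0 < p" "\<alpha> * p = 2 + \<alpha>" "1 - p = -2 / \<alpha>"
    using \<alpha>_pos by (auto simp: p_def field_simps)
  show "0 \<le> 2 * c * (1 + \<alpha>) * (2 * p / \<kappa>) powr p" using c_pos \<alpha>_pos by simp
  fix n m :: nat
  assume n: "2 \<le> n" and m: "1 \<le> m"
  define y where "y = real n / 2 * (\<kappa> * real m powr (-\<alpha>))"
  have y: "0 < y" using n m \<kappa>_pos by (simp add: y_def)
  have "abel_term n m \<le> 2 * (c * (1 + \<alpha>) * real m powr (-2 - \<alpha>)) * (real n * exp (-y))"
    unfolding abel_term_def y_def
    using Z_diff_le[OF m] abel_weight_power_le[OF n m] Z_antimono[OF m] abel_weight_nonneg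
    by (intro mult_mono mult_left_mono) auto
  also have "\<dots> \<le> 2 * (c * (1 + \<alpha>) * real m powr (-2 - \<alpha>)) * (real n * (p / y) powr p)"
    using exp_neg_le_powr[OF y p(1)] c_pos \<alpha>_pos by (intro mult_left_mono) auto
  also have "(p / y) powr p = (2 * p / \<kappa>) powr p * real n powr (-p) * real m powr (2 + \<alpha>)"
  proof -
    have "p / y = (2 * p / \<kappa>) * (1 / real n) * real m powr \<alpha>"
      unfolding y_def using \<kappa>_pos n m by (simp add: powr_minus_divide field_simps)
    then show ?thesis
      using p \<kappa>_pos n m by (simp add: powr_mult powr_powr powr_divide powr_minus_divide)
  qed
  also have "2 * (c * (1 + \<alpha>) * real m powr (-2 - \<alpha>))
      * (real n * ((2 * p / \<kappa>) powr p * real n powr (-p) * real m powr (2 + \<alpha>)))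
      = 2 * c * (1 + \<alpha>) * (2 * p / \<kappa>) powr p * (real m powr (-2 - \<alpha>) * real m powr (2 + \<alpha>))
        * (real n * real n powr (-p))"
    by (simp add: algebra_simps)
  also have "real m powr (-2 - \<alpha>) * real m powr (2 + \<alpha>) = 1"
    using m by (simp flip: powr_add)
  also have "real n * real n powr (-p) = real n powr (-2 / \<alpha>)"
    using powr_mult_base[of "real n" "-p"] n p(3) by simp
  finally show "abel_term n m \<le> 2 * c * (1 + \<alpha>) * (2 * p / \<kappa>) powr p * real n powr (-2 / \<alpha>)"
    by simp
qed

lemma abel_head_sum_le:
  assumes A: "\<And>m. 1 \<le> m \<Longrightarrow> abel_term n m \<le> A * real n powr (-2 / \<alpha>)" "0 \<le> A"
    and L: "0 < L" "L powr \<alpha> = real n" and N: "real N \<le> L"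
  shows "(\<Sum>m=1..N. abel_term n m) \<le> A / L"
proof -
  have "real n powr (-2 / \<alpha>) = L powr (-2)"
    using L \<alpha>_pos by (simp flip: L(2) add: powr_powr)
  then have "(\<Sum>m=1..N. abel_term n m) \<le> real N * (A * L powr (-2))"
    using sum_mono[of "{1..N}" "abel_term n" "\<lambda>_. A * L powr (-2)"] A(1) by simp
  also have "\<dots> \<le> L * (A * L powr (-2))"
    using N A(2) by (intro mult_right_mono) auto
  also have "\<dots> = A / L"
    using L(1) by (simp add: powr_minus_divide power2_eq_square field_simps)
  finally show ?thesis .
qed

lemma abel_middle_sum_le:
  assumes L: "0 < L" "L powr \<alpha> = real n" and N: "1 \<le> N" "L \<le> 2 * real N"
  shows "(\<Sum>m\<in>{N<..<M}. abel_term n m) \<le> 2 * c * 2 powr (1 + \<alpha>) / L"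
proof -
  have n: "0 < real n" using L by (metis powr_gt_zero less_irrefl)
  have "abel_term n m \<le> (2 * c * (1 + \<alpha>) * real n) * real m powr (-2 - \<alpha>)" if "1 \<le> m" for m
  proof -
    have "abel_weight (Suc m) ^ (n - 1) \<le> 1"
      using abel_weight_nonneg abel_weight_le_one by (intro power_le_one)
    then have "abel_term n m \<le> 2 * (c * (1 + \<alpha>) * real m powr (-2 - \<alpha>)) * (real n * 1)"
      unfolding abel_term_def using Z_diff_le[OF that] Z_antimono[OF that] abel_weight_nonneg
      by (intro mult_mono mult_left_mono) auto
    then show ?thesis by (simp add: algebra_simps)
  qed
  then have "(\<Sum>m\<in>{N<..<M}. abel_term n m) \<le> (\<Sum>m\<in>{N<..M}. (2 * c * (1 + \<alpha>) * real n) * real m powr (-2 - \<alpha>))"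
    using N(1) c_pos \<alpha>_pos by (intro order_trans[OF sum_mono sum_mono2]) auto
  also have "\<dots> \<le> (2 * c * (1 + \<alpha>) * real n) * (real N powr (-1 - \<alpha>) / (1 + \<alpha>))"
  proof -
    have e: "-(2 + \<alpha>) = -2 - \<alpha>" "1 - (2 + \<alpha>) = -1 - \<alpha>" "2 + \<alpha> - 1 = 1 + \<alpha>" by simp_all
    show ?thesis
      unfolding sum_distrib_left[symmetric]
      using sum_powr_tail_le[of "2 + \<alpha>" N M, unfolded e] N(1) c_pos \<alpha>_pos by (intro mult_left_mono) auto
  qed
  also have "\<dots> = 2 * c * (real n / real N powr (1 + \<alpha>))"
    using \<alpha>_pos by (simp add: powr_minus_one_minus)
  also have "\<dots> \<le> 2 * c * (real n / (L / 2) powr (1 + \<alpha>))"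
    using N L \<alpha>_pos c_pos by (intro mult_left_mono divide_left_mono powr_mono2) auto
  also have "\<dots> = 2 * c * 2 powr (1 + \<alpha>) / L"
    using L n by (simp add: powr_divide powr_add)
  finally show ?thesis .
qed

lemma Z_last_le:
  assumes L: "0 < L" "L powr \<alpha> = real n" and M: "L \<le> real M"
  shows "2 * Z M * real n \<le> 2 * c / L"
proof -
  have n: "0 < real n" using L by (metis powr_gt_zero less_irrefl)
  have "1 \<le> M" using L M by simp
  then have "2 * Z M * real n = 2 * c * (real n / real M powr (1 + \<alpha>))"
    by (simp add: Z_def powr_minus_one_minus)
  also have "\<dots> \<le> 2 * c * (real n / L powr (1 + \<alpha>))"
    using L M \<alpha>_pos c_pos by (intro mult_left_mono divide_left_mono powr_mono2) auto
  also have "\<dots> = 2 * c / L"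
    using L n by (simp add: powr_add)
  finally show ?thesis .
qed

lemma powr_inverse_scale:
  assumes "1 \<le> n"
  shows "1 \<le> real n powr (1 / \<alpha>)" "(real n powr (1 / \<alpha>)) powr \<alpha> = real n"
  using assms \<alpha>_pos by (auto simp: powr_powr ge_one_powr_ge_zero)

lemma fps_norm_upto_one_minus_X_gf_power_le:
  obtains C where "0 \<le> C"
    "\<And>n K. 2 \<le> n \<Longrightarrow> fps_norm_upto K ((1 - fps_X) * gf ^ n) \<le> C / real n powr (1 / \<alpha>)"
proof -
  obtain A where A: "0 \<le> A" "\<And>n m. 2 \<le> n \<Longrightarrow> 1 \<le> m \<Longrightarrow> abel_term n m \<le> A * real n powr (-2 / \<alpha>)"
    by (rule abel_term_le) blast
  have "fps_norm_upto K ((1 - fps_X) * gf ^ n) \<le> (A + 2 * c * 2 powr (1 + \<alpha>) + 2 * c) / real n powr (1 / \<alpha>)"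
    if n: "2 \<le> n" for n K
  proof -
    define L where "L = real n powr (1 / \<alpha>)"
    define N where "N = nat \<lfloor>L\<rfloor>"
    define M where "M = max K (Suc N)"
    have L: "1 \<le> L" "L powr \<alpha> = real n"
      using powr_inverse_scale[of n] n unfolding L_def by auto
    note N = nat_floor_bounds[OF L(1), folded N_def]
    have "{1..<M} = {1..N} \<union> {N<..<M}" using N unfolding M_def by auto
    then have "(\<Sum>m\<in>{1..<M}. abel_term n m) = (\<Sum>m=1..N. abel_term n m) + (\<Sum>m\<in>{N<..<M}. abel_term n m)"
      by (simp only:) (rule sum.union_disjoint, auto)
    moreover have "fps_norm_upto K ((1 - fps_X) * gf ^ n) \<le> (\<Sum>m\<in>{1..<M}. abel_term n m) + 2 * Z M * real n"
      using n unfolding M_def by (intro fps_norm_upto_one_minus_X_gf_power) auto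
    moreover have "(\<Sum>m=1..N. abel_term n m) \<le> A / L"
      using A n L N by (intro abel_head_sum_le) auto
    moreover have "(\<Sum>m\<in>{N<..<M}. abel_term n m) \<le> 2 * c * 2 powr (1 + \<alpha>) / L"
      using L N by (intro abel_middle_sum_le) auto
    moreover have "2 * Z M * real n \<le> 2 * c / L"
      using L N unfolding M_def by (intro Z_last_le) auto
    ultimately show ?thesis unfolding L_def[symmetric] add_divide_distrib by linarith
  qed
  then show thesis using A(1) c_pos by (intro that[of "A + 2 * c * 2 powr (1 + \<alpha>) + 2 * c"]) auto
qed

lemma small_index_sum_le:
  assumes V: "fps_norm_upto K ((1 - fps_X) * g) \<le> C / L"
    and L: "0 < L" "L powr \<alpha> = real n" and N: "real N \<le> L"
  shows "(\<Sum>j=1..N. Z j * fps_norm_upto K ((1 - fps_X ^ j) * g)) \<le> c * C / (1 - \<alpha>) / real n"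
proof -
  let ?V = "fps_norm_upto K ((1 - fps_X) * g)"
  have "Z j * fps_norm_upto K ((1 - fps_X ^ j) * g) \<le> (c * ?V) * real j powr (-\<alpha>)" if "1 \<le> j" for j
  proof -
    have "Z j * fps_norm_upto K ((1 - fps_X ^ j) * g) \<le> Z j * (real j * ?V)"
      using fps_norm_upto_one_minus_X_power_mult f_nonneg by (intro mult_left_mono) auto
    also have "\<dots> = (c * ?V) * (real j * real j powr (-1 - \<alpha>))"
      using that by (simp add: Z_def)
    also have "real j * real j powr (-1 - \<alpha>) = real j powr (-\<alpha>)"
      using powr_mult_base[of "real j" "-1 - \<alpha>"] that by simp
    finally show ?thesis .
  qed
  then have "(\<Sum>j=1..N. Z j * fps_norm_upto K ((1 - fps_X ^ j) * g))
      \<le> (c * ?V) * (\<Sum>j=1..N. real j powr (-\<alpha>))"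
    unfolding sum_distrib_left by (intro sum_mono) auto
  also have "\<dots> \<le> (c * (C / L)) * (L powr (1 - \<alpha>) / (1 - \<alpha>))"
  proof (rule mult_mono)
    show "c * ?V \<le> c * (C / L)" using V c_pos by (intro mult_left_mono) auto
    have "real N powr (1 - \<alpha>) \<le> L powr (1 - \<alpha>)"
      using N \<alpha>_lt_1 by (intro powr_mono2) auto
    then have "real N powr (1 - \<alpha>) / (1 - \<alpha>) \<le> L powr (1 - \<alpha>) / (1 - \<alpha>)"
      using \<alpha>_lt_1 by (intro divide_right_mono) auto
    then show "(\<Sum>j=1..N. real j powr (-\<alpha>)) \<le> L powr (1 - \<alpha>) / (1 - \<alpha>)"
      using sum_powr_le[OF \<alpha>_pos \<alpha>_lt_1, of N] by linarith
    show "0 \<le> c * (C / L)" using V c_pos fps_norm_upto_nonneg[of K] by (meson order_trans mult_nonneg_nonneg less_imp_le)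
    show "0 \<le> (\<Sum>j=1..N. real j powr (-\<alpha>))" by (simp add: sum_nonneg)
  qed
  also have "\<dots> = c * C / (1 - \<alpha>) / real n"
    using L by (simp add: powr_diff)
  finally show ?thesis .
qed

lemma large_index_sum_le:
  assumes g: "fps_norm_upto K g \<le> 1"
    and L: "0 < L" "L powr \<alpha> = real n" and N: "1 \<le> N" "L \<le> 2 * real N"
  shows "(\<Sum>j\<in>{N<..K}. Z j * fps_norm_upto K ((1 - fps_X ^ j) * g)) \<le> 2 * c * 2 powr \<alpha> / \<alpha> / real n"
proof -
  have "Z j * fps_norm_upto K ((1 - fps_X ^ j) * g) \<le> (2 * c) * real j powr (-(1 + \<alpha>))" if "1 \<le> j" for j
  proof -
    have "fps_norm_upto K ((1 - fps_X ^ j) * g) \<le> 2"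
      using fps_norm_upto_one_minus_X_power_mult_le_2[of K j g] g by simp
    then have "Z j * fps_norm_upto K ((1 - fps_X ^ j) * g) \<le> Z j * 2"
      using f_nonneg by (intro mult_left_mono) auto
    then show ?thesis using that by (simp add: Z_def minus_add_distrib)
  qed
  then have "(\<Sum>j\<in>{N<..K}. Z j * fps_norm_upto K ((1 - fps_X ^ j) * g))
      \<le> (2 * c) * (\<Sum>j\<in>{N<..K}. real j powr (-(1 + \<alpha>)))"
    using N(1) unfolding sum_distrib_left by (intro sum_mono) auto
  also have "\<dots> \<le> (2 * c) * (real N powr (1 - (1 + \<alpha>)) / ((1 + \<alpha>) - 1))"
    using sum_powr_tail_le[of "1 + \<alpha>" N K] N(1) \<alpha>_pos c_pos by (intro mult_left_mono) auto
  also have "\<dots> = 2 * c / \<alpha> / real N powr \<alpha>"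
    by (simp add: powr_minus_divide)
  also have "\<dots> \<le> 2 * c / \<alpha> / (L / 2) powr \<alpha>"
    using N L \<alpha>_pos c_pos by (intro divide_left_mono powr_mono2) auto
  also have "\<dots> = 2 * c * 2 powr \<alpha> / \<alpha> / real n"
    using L by (simp add: powr_divide)
  finally show ?thesis .
qed

lemma tail_term_le_if_le:
  assumes K: "1 \<le> K" "real K \<le> L" and V: "fps_norm_upto K ((1 - fps_X) * g) \<le> C / L" "0 \<le> C"
    and L: "0 < L" "L powr \<alpha> = real n"
  shows "(1 - (\<Sum>j=1..K. Z j)) * fps_norm_upto K g \<le> 2 * c * C / \<alpha> / real n"
proof -
  have "fps_norm_upto K g \<le> real (Suc K) * fps_norm_upto K ((1 - fps_X) * g)"
    by (rule fps_norm_upto_le_one_minus_X_mult)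
  also have "\<dots> \<le> real (Suc K) * (C / L)"
    using V(1) by (intro mult_left_mono) auto
  also have "\<dots> \<le> 2 * real K * (C / L)"
    using K V L by (intro mult_right_mono) auto
  finally have "(1 - (\<Sum>j=1..K. Z j)) * fps_norm_upto K g
      \<le> (c * real K powr (-\<alpha>) / \<alpha>) * (2 * real K * (C / L))"
    using Z_tail_le[OF K(1)] sum_le_one[of K] fps_norm_upto_nonneg by (intro mult_mono) auto
  also have "\<dots> = 2 * c * C / \<alpha> * (real K powr (-\<alpha>) * real K) / L"
    by (simp add: field_simps)
  also have "real K powr (-\<alpha>) * real K = real K powr (1 - \<alpha>)"
    using powr_mult_base[of "real K" "-\<alpha>"] K by (simp add: mult.commute)
  also have "2 * c * C / \<alpha> * real K powr (1 - \<alpha>) / L \<le> 2 * c * C / \<alpha> * L powr (1 - \<alpha>) / L"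
    using K L V c_pos \<alpha>_pos \<alpha>_lt_1 by (intro divide_right_mono mult_left_mono powr_mono2) auto
  also have "\<dots> = 2 * c * C / \<alpha> / real n"
    using L by (simp add: powr_diff)
  finally show ?thesis .
qed

lemma tail_term_le_if_gt:
  assumes K: "1 \<le> K" "L < real K" and g: "fps_norm_upto K g \<le> 1"
    and L: "0 < L" "L powr \<alpha> = real n"
  shows "(1 - (\<Sum>j=1..K. Z j)) * fps_norm_upto K g \<le> c / \<alpha> / real n"
proof -
  have "(1 - (\<Sum>j=1..K. Z j)) * fps_norm_upto K g \<le> 1 - (\<Sum>j=1..K. Z j)"
    using sum_le_one[of K] g by (simp add: mult_left_le)
  also have "\<dots> \<le> c * real K powr (-\<alpha>) / \<alpha>"
    by (rule Z_tail_le[OF K(1)])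
  also have "\<dots> \<le> c * L powr (-\<alpha>) / \<alpha>"
    using K L c_pos \<alpha>_pos by (intro divide_right_mono mult_left_mono powr_mono2') auto
  also have "\<dots> = c / \<alpha> / real n"
    using L by (simp add: powr_minus_divide)
  finally show ?thesis .
qed

lemma tail_term_le:
  assumes K: "1 \<le> K" and V: "fps_norm_upto K ((1 - fps_X) * g) \<le> C / L" "0 \<le> C"
    and g: "fps_norm_upto K g \<le> 1" and L: "0 < L" "L powr \<alpha> = real n"
  shows "(1 - (\<Sum>j=1..K. Z j)) * fps_norm_upto K g \<le> (2 * c * C + c) / \<alpha> / real n"
proof -
  have "0 \<le> c / \<alpha> / real n" "0 \<le> 2 * c * C / \<alpha> / real n"
    using c_pos \<alpha>_pos V(2) by simp_all
  moreover have "(1 - (\<Sum>j=1..K. Z j)) * fps_norm_upto K g \<le> 2 * c * C / \<alpha> / real n"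
    if "real K \<le> L"
    using tail_term_le_if_le[OF K(1) that V L] .
  moreover have "(1 - (\<Sum>j=1..K. Z j)) * fps_norm_upto K g \<le> c / \<alpha> / real n"
    if "L < real K"
    using tail_term_le_if_gt[OF K(1) that g L] .
  ultimately show ?thesis
    unfolding add_divide_distrib by (cases "real K \<le> L") (simp_all add: not_le add_increasing add_increasing2)
qed

lemma fps_norm_upto_gf_power_diff_le_of_smoothing:
  assumes V: "0 \<le> C" "fps_norm_upto K ((1 - fps_X) * gf ^ n) \<le> C / real n powr (1 / \<alpha>)"
    and n: "2 \<le> n" and K: "1 \<le> K"
  shows "fps_norm_upto K (gf ^ n - gf ^ Suc n)
    \<le> (c * C / (1 - \<alpha>) + 2 * c * 2 powr \<alpha> / \<alpha> + (2 * c * C + c) / \<alpha>) / real n"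
proof -
  define L where "L = real n powr (1 / \<alpha>)"
  define N where "N = nat \<lfloor>L\<rfloor>"
  let ?t = "\<lambda>j. Z j * fps_norm_upto K ((1 - fps_X ^ j) * gf ^ n)"
  have L: "1 \<le> L" "L powr \<alpha> = real n"
    using powr_inverse_scale[of n] n unfolding L_def by auto
  note N = nat_floor_bounds[OF L(1), folded N_def]
  have "(\<Sum>j=1..K. ?t j) \<le> (\<Sum>j\<in>{1..N} \<union> {N<..K}. ?t j)"
    using f_nonneg fps_norm_upto_nonneg by (intro sum_mono2) auto
  also have "\<dots> = (\<Sum>j=1..N. ?t j) + (\<Sum>j\<in>{N<..K}. ?t j)"
    by (intro sum.union_disjoint) auto
  finally have "(\<Sum>j=1..K. ?t j) \<le> (\<Sum>j=1..N. ?t j) + (\<Sum>j\<in>{N<..K}. ?t j)" .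
  moreover have "fps_norm_upto K (gf ^ n - gf ^ Suc n)
      \<le> (\<Sum>j=1..K. ?t j) + (1 - (\<Sum>j=1..K. Z j)) * fps_norm_upto K (gf ^ n)"
    using fps_norm_upto_one_minus_gf_mult[of K "gf ^ n"] by (simp only: left_diff_distrib mult_1_left power_Suc)
  moreover have "(\<Sum>j=1..N. ?t j) \<le> c * C / (1 - \<alpha>) / real n"
    using V L N unfolding L_def[symmetric] by (intro small_index_sum_le) auto
  moreover have "(\<Sum>j\<in>{N<..K}. ?t j) \<le> 2 * c * 2 powr \<alpha> / \<alpha> / real n"
    using L N fps_norm_upto_gf_power by (intro large_index_sum_le) auto
  moreover have "(1 - (\<Sum>j=1..K. Z j)) * fps_norm_upto K (gf ^ n) \<le> (2 * c * C + c) / \<alpha> / real n"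
    using K V L fps_norm_upto_gf_power unfolding L_def[symmetric] by (intro tail_term_le) auto
  ultimately show ?thesis unfolding add_divide_distrib by linarith
qed

lemma fps_norm_upto_gf_power_diff_le:
  obtains B where "\<And>n K. 1 \<le> n \<Longrightarrow> fps_norm_upto K (gf ^ n - gf ^ Suc n) \<le> B / real n"
proof -
  obtain C where C: "0 \<le> C"
    "\<And>n K. 2 \<le> n \<Longrightarrow> fps_norm_upto K ((1 - fps_X) * gf ^ n) \<le> C / real n powr (1 / \<alpha>)"
    by (rule fps_norm_upto_one_minus_X_gf_power_le) blast
  define B where "B = c * C / (1 - \<alpha>) + 2 * c * 2 powr \<alpha> / \<alpha> + (2 * c * C + c) / \<alpha>"
  have "fps_norm_upto K (gf ^ n - gf ^ Suc n) \<le> max 2 B / real n" if n: "1 \<le> n" for n K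
  proof (cases "n = 1")
    case True
    have "fps_norm_upto K (gf ^ n - gf ^ Suc n) \<le> 1 + 1"
      using fps_norm_upto_diff fps_norm_upto_gf_power by (smt (verit))
    then show ?thesis using True by simp
  next
    case False
    then have "fps_norm_upto K (gf ^ n - gf ^ Suc n) \<le> fps_norm_upto (max 1 K) (gf ^ n - gf ^ Suc n)"
      by (intro fps_norm_upto_mono) simp
    also have "\<dots> \<le> B / real n"
      unfolding B_def using C False n by (intro fps_norm_upto_gf_power_diff_le_of_smoothing) auto
    also have "\<dots> \<le> max 2 B / real n"
      by (simp add: divide_right_mono)
    finally show ?thesis .
  qed
  then show thesis by (rule that)
qed

end

theorem theorem5p4:
  fixes \<alpha> :: real
  assumes "0 < \<alpha>" and "\<alpha> < 1"
  shows "zeta_prob \<alpha> \<in> class_A"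
proof -
  interpret zeta_seq \<alpha> using assms by unfold_locales
  have Z_int: "zeta_prob \<alpha> (int m) = Z m" for m
    by (simp add: zeta_prob_def Z_def c_def)
  have neg: "zeta_prob \<alpha> k = 0" if "k < 0" for k
    using that by (simp add: zeta_prob_def)
  have "zeta_prob \<alpha> \<in> prob_Zplus"
  proof (rule prob_ZplusI)
    show "0 \<le> zeta_prob \<alpha> k" for k
      using c_pos by (simp add: zeta_prob_def c_def)
  qed (simp_all add: neg Z_int Z_sums)
  moreover have "Abs_fps (\<lambda>i. zeta_prob \<alpha> (int i)) = gf"
    by (simp add: gf_def Z_int)
  moreover obtain B where "\<And>n K. 1 \<le> n \<Longrightarrow> fps_norm_upto K (gf ^ n - gf ^ Suc n) \<le> B / real n"
    by (rule fps_norm_upto_gf_power_diff_le) blast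
  ultimately show ?thesis by (intro class_AI) auto
qed

end
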